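(* Let $G$ be any group (discrete). Then $\ell^1(G)\cdot\ell^\infty(G)^*\subseteq\ell^1(G)$ if and only if $G$ is finite.
   Context: $\ell^1(G)$ is the group algebra with convolution; its second dual is identified with $\ell^\infty(G)^*$ and carries the first Arens product: for $a,b\in\ell^1(G)$, $a'\in\ell^\infty(G)$, $a'',b''\in\ell^\infty(G)^*$, $\langle a'a,b\rangle=\langle a',ab\rangle$, $\langle b''a',a\rangle=\langle b'',a'a\rangle$, $\langle a''\cdot b'',a'\rangle=\langle a'',b''a'\rangle$. The set $\ell^1(G)\cdot\ell^\infty(G)^*$ means $\{a\cdot a'': a\in\ell^1(G),\,a''\in\ell^\infty(G)^*\}$, with $\ell^1(G)$ canonically embedded in its bidual. *)

theory Defs
  imports "HOL-Analysis.Analysis"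
begin

text \<open>Discrete group G = a type of class group_add (written additively, not necessarily
commutative). Elements of l1(G), l_infinity(G) are functions
G => complex; elements of l_infinity(G)^* are functionals on (G => complex), of which only
the values on bounded functions matter.\<close>

definition l1 :: "('g \<Rightarrow> complex) \<Rightarrow> bool" where
  "l1 a \<longleftrightarrow> (\<lambda>x. norm (a x)) summable_on UNIV"

definition linf :: "('g \<Rightarrow> complex) \<Rightarrow> bool" where
  "linf a' \<longleftrightarrow> bounded (range a')"

definition sup_norm :: "('g \<Rightarrow> complex) \<Rightarrow> real" where
  "sup_norm a' = (SUP x. norm (a' x))"

definition linf_dual :: "(('g \<Rightarrow> complex) \<Rightarrow> complex) \<Rightarrow> bool" where
  "linf_dual F \<longleftrightarrow>
     (\<forall>u v. linf u \<longrightarrow> linf v \<longrightarrow> F (\<lambda>x. u x + v x) = F u + F v) \<and>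
     (\<forall>c u. linf u \<longrightarrow> F (\<lambda>x. c * u x) = c * F u) \<and>
     (\<exists>C. \<forall>u. linf u \<longrightarrow> norm (F u) \<le> C * sup_norm u)"

definition pair :: "('g \<Rightarrow> complex) \<Rightarrow> ('g \<Rightarrow> complex) \<Rightarrow> complex" where
  "pair a' a = (\<Sum>\<^sub>\<infinity>x. a' x * a x)"

definition conv :: "('g::group_add \<Rightarrow> complex) \<Rightarrow> ('g \<Rightarrow> complex) \<Rightarrow> ('g \<Rightarrow> complex)" where
  "conv a b = (\<lambda>x. \<Sum>\<^sub>\<infinity>y. a y * b (- y + x))"

definition delta :: "'g \<Rightarrow> ('g \<Rightarrow> complex)" where
  "delta y = (\<lambda>x. if x = y then 1 else 0)"

text \<open>a' . a in l_infinity(G):  <a'a, b> = <a', a*b>; its value at y is <a', a * delta y>.\<close>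
definition linf_l1_act :: "('g::group_add \<Rightarrow> complex) \<Rightarrow> ('g \<Rightarrow> complex) \<Rightarrow> ('g \<Rightarrow> complex)" where
  "linf_l1_act a' a = (\<lambda>y. pair a' (conv a (delta y)))"

text \<open>b'' . a' in l_infinity(G):  <b''a', a> = <b'', a'a>; its value at y is <b'', a' delta y>.\<close>
definition bidual_linf_act ::
  "(('g::group_add \<Rightarrow> complex) \<Rightarrow> complex) \<Rightarrow> ('g \<Rightarrow> complex) \<Rightarrow> ('g \<Rightarrow> complex)" where
  "bidual_linf_act b'' a' = (\<lambda>y. b'' (linf_l1_act a' (delta y)))"

definition arens1 ::
  "(('g::group_add \<Rightarrow> complex) \<Rightarrow> complex) \<Rightarrow> (('g \<Rightarrow> complex) \<Rightarrow> complex)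
     \<Rightarrow> (('g \<Rightarrow> complex) \<Rightarrow> complex)" where
  "arens1 a'' b'' = (\<lambda>a'. a'' (bidual_linf_act b'' a'))"

definition embed :: "('g \<Rightarrow> complex) \<Rightarrow> (('g \<Rightarrow> complex) \<Rightarrow> complex)" where
  "embed a = (\<lambda>a'. pair a' a)"

end

theory Submission
  imports Defs
begin

text \<open>
  For finite \<open>G\<close> every function is summable and every functional on \<open>\<ell>\<^sup>\<infinity>(G)\<close> is a finite
  linear combination of point evaluations, so \<open>a \<cdot> a''\<close> is represented by an explicit finite sum.
  For infinite \<open>G\<close>, \<open>\<delta>\<^sub>0\<close> is a left unit for the first Arens product, so it suffices to exhibit
  a functional that is not given by any \<open>c \<in> \<ell>\<^sup>1(G)\<close>: a cluster point (in the Tychonoff product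
  of discs) of the point evaluations along the cofinite filter kills every \<open>\<delta>\<^sub>y\<close> but takes the
  value 1 on the constant function 1.
\<close>

lemma infsum_mult_delta: "(\<Sum>\<^sub>\<infinity>x. f x * delta y x) = (f y :: complex)"
proof -
  have "(\<Sum>\<^sub>\<infinity>x. f x * delta y x) = (\<Sum>\<^sub>\<infinity>x\<in>{y}. f x * delta y x)"
    by (rule infsum_cong_neutral) (auto simp: delta_def)
  then show ?thesis
    by (simp add: delta_def)
qed

lemma pair_delta_right: "pair a' (delta y) = a' y"
  by (simp add: pair_def infsum_mult_delta)

lemma pair_delta_left: "pair (delta y) a = a y"
  using infsum_mult_delta[of a y] by (simp add: pair_def mult.commute)

lemma conv_delta_zero_left: "conv (delta 0) b = b"
proof
  fix x
  have "conv (delta 0) b x = (\<Sum>\<^sub>\<infinity>z. b (- z + x) * delta 0 z)"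
    by (simp add: conv_def mult.commute)
  then show "conv (delta 0) b x = b x"
    by (simp add: infsum_mult_delta)
qed

lemma linf_l1_act_delta_zero: "linf_l1_act a' (delta 0) = a'"
  by (rule ext) (simp add: linf_l1_act_def conv_delta_zero_left pair_delta_right)

lemma arens1_embed_delta_zero: "arens1 (embed (delta 0)) a'' = a''"
  by (rule ext) (simp add: arens1_def embed_def pair_delta_right bidual_linf_act_def
      linf_l1_act_delta_zero)

lemma l1_delta: "l1 (delta y)"
  unfolding l1_def
  by (rule summable_on_cong_neutral[where S="{y}", THEN iffD1]) (auto simp: delta_def)

lemma l1_finite: "finite (UNIV :: 'g set) \<Longrightarrow> l1 (a :: 'g \<Rightarrow> complex)"
  by (simp add: l1_def)

lemma linf_finite: "finite (UNIV :: 'g set) \<Longrightarrow> linf (a' :: 'g \<Rightarrow> complex)"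
  by (simp add: linf_def finite_imp_bounded)

lemma linf_delta: "linf (delta y)"
proof -
  have "range (delta y) \<subseteq> {0, 1}"
    by (auto simp: delta_def)
  then show ?thesis
    unfolding linf_def by (rule bounded_subset[OF finite_imp_bounded, rotated]) simp
qed

lemma linf_const: "linf (\<lambda>_. c)"
  by (simp add: linf_def)

lemma linf_iff_norm_bounded: "linf u \<longleftrightarrow> (\<exists>B. \<forall>x. norm (u x) \<le> B)"
  by (simp add: linf_def bounded_iff)

lemma linf_add: "linf u \<Longrightarrow> linf v \<Longrightarrow> linf (\<lambda>x. u x + v x)"
  unfolding linf_iff_norm_bounded by (metis add_mono norm_triangle_le)

lemma linf_cmult: "linf u \<Longrightarrow> linf (\<lambda>x. c * u x)"
  unfolding linf_iff_norm_bounded by (metis mult_left_mono norm_ge_zero norm_mult)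

lemma norm_le_sup_norm: "linf u \<Longrightarrow> norm (u x) \<le> sup_norm u"
  unfolding sup_norm_def linf_def
  by (intro cSUP_upper) (auto simp: bounded_iff bdd_above_def)

lemma compact_Pi_UNIV:
  fixes K :: "'i \<Rightarrow> 'b::topological_space set"
  assumes "\<And>i. compact (K i)"
  shows "compact (Pi\<^sub>E UNIV K)"
  using compactin_PiE[of "\<lambda>i. euclidean" UNIV K] assms
  by (simp add: euclidean_product_topology)

lemma closed_contains_cluster_point:
  assumes "inf (nhds l) F \<noteq> bot" "closed C" "eventually (\<lambda>x. x \<in> C) F"
  shows "l \<in> C"
proof (rule ccontr)
  assume "l \<notin> C"
  then have "eventually (\<lambda>x. x \<notin> C) (nhds l)"
    using eventually_nhds_in_open[of "- C" l] \<open>closed C\<close> by (simp add: open_Compl)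
  then have "eventually (\<lambda>_. False) (inf (nhds l) F)"
    using assms(3) unfolding eventually_inf by blast
  with assms(1) show False
    by (simp add: trivial_limit_def)
qed

lemma exists_cluster_point_in_product:
  fixes f :: "'a \<Rightarrow> 'i \<Rightarrow> 'b::topological_space"
  assumes "F \<noteq> bot" "\<And>i. compact (K i)" "\<And>x i. f x i \<in> K i"
  obtains l where "\<And>C. closed C \<Longrightarrow> eventually (\<lambda>x. f x \<in> C) F \<Longrightarrow> l \<in> C"
proof -
  have "eventually (\<lambda>y. y \<in> Pi\<^sub>E UNIV K) (filtermap f F)"
    using assms(3) by (simp add: eventually_filtermap PiE_UNIV_domain)
  moreover have "filtermap f F \<noteq> bot"
    using assms(1) by (simp add: filtermap_bot_iff)
  ultimately obtain l where "inf (nhds l) (filtermap f F) \<noteq> bot"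
    using compact_Pi_UNIV[of K, OF assms(2)] unfolding compact_filter by blast
  then show thesis
    using closed_contains_cluster_point[of l "filtermap f F"]
    by (intro that) (simp add: eventually_filtermap)
qed

lemma exists_linf_dual_vanishing_on_deltas:
  assumes "infinite (UNIV :: 'g set)"
  obtains \<Phi> :: "('g \<Rightarrow> complex) \<Rightarrow> complex"
  where "linf_dual \<Phi>" "\<And>y. \<Phi> (delta y) = 0" "\<Phi> (\<lambda>_. 1) = 1"
proof -
  \<comment> \<open>The junk value 0 on unbounded \<open>u\<close> keeps every coordinate in a compact disc.\<close>
  define ev :: "'g \<Rightarrow> ('g \<Rightarrow> complex) \<Rightarrow> complex"
    where "ev x u = (if linf u then u x else 0)" for x u
  define K :: "('g \<Rightarrow> complex) \<Rightarrow> complex set"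
    where "K u = cball 0 (if linf u then sup_norm u else 0)" for u
  have "cofinite \<noteq> (bot :: 'g filter)"
    using assms by simp
  moreover have "ev x u \<in> K u" for x u
    by (simp add: ev_def K_def norm_le_sup_norm)
  ultimately obtain \<Phi> where \<Phi>: "\<And>C. closed C \<Longrightarrow> eventually (\<lambda>x. ev x \<in> C) cofinite \<Longrightarrow> \<Phi> \<in> C"
    using exists_cluster_point_in_product[of cofinite K ev] by (auto simp: K_def)
  have "linf_dual \<Phi>"
    unfolding linf_dual_def
  proof (intro conjI allI impI exI)
    fix u v :: "'g \<Rightarrow> complex"
    assume "linf u" "linf v"
    then show "\<Phi> (\<lambda>x. u x + v x) = \<Phi> u + \<Phi> v"
      using \<Phi>[of "{\<Psi>. \<Psi> (\<lambda>x. u x + v x) = \<Psi> u + \<Psi> v}"]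
      by (simp add: closed_Collect_eq continuous_on_add ev_def linf_add)
  next
    fix c and u :: "'g \<Rightarrow> complex"
    assume "linf u"
    then show "\<Phi> (\<lambda>x. c * u x) = c * \<Phi> u"
      using \<Phi>[of "{\<Psi>. \<Psi> (\<lambda>x. c * u x) = c * \<Psi> u}"]
      by (simp add: closed_Collect_eq continuous_on_mult_left ev_def linf_cmult)
  next
    fix u :: "'g \<Rightarrow> complex"
    assume "linf u"
    then show "norm (\<Phi> u) \<le> 1 * sup_norm u"
      using \<Phi>[of "{\<Psi>. norm (\<Psi> u) \<le> sup_norm u}"]
      by (simp add: closed_Collect_le continuous_on_norm ev_def norm_le_sup_norm)
  qed
  moreover have "\<Phi> (delta y) = 0" for y
  proof -
    have "{x. ev x (delta y) \<noteq> 0} \<subseteq> {y}"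
      by (auto simp: ev_def delta_def)
    then have "eventually (\<lambda>x. ev x \<in> {\<Psi>. \<Psi> (delta y) = 0}) cofinite"
      by (auto simp: eventually_cofinite intro: finite_subset)
    then show ?thesis
      using \<Phi>[of "{\<Psi>. \<Psi> (delta y) = 0}"] by (simp add: closed_Collect_eq)
  qed
  moreover have "\<Phi> (\<lambda>_. 1) = 1"
    using \<Phi>[of "{\<Psi>. \<Psi> (\<lambda>_. 1) = 1}"]
    by (simp add: closed_Collect_eq ev_def linf_const)
  ultimately show thesis
    by (rule that)
qed

lemma not_embed_if_vanishing_on_deltas:
  assumes "\<And>y. \<Phi> (delta y) = 0" "\<Phi> (\<lambda>_. 1) = 1"
  shows "\<not> (\<exists>c. \<forall>a'. linf a' \<longrightarrow> \<Phi> a' = embed c a')"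
proof
  assume "\<exists>c. \<forall>a'. linf a' \<longrightarrow> \<Phi> a' = embed c a'"
  then obtain c where c: "\<And>a'. linf a' \<Longrightarrow> \<Phi> a' = pair a' c"
    by (auto simp: embed_def)
  have "c y = 0" for y
    using c[OF linf_delta] assms(1) by (simp add: pair_delta_left)
  then have "\<Phi> (\<lambda>_. 1) = 0"
    using c[OF linf_const] by (simp add: pair_def)
  with assms(2) show False
    by simp
qed

lemma linf_dual_sum_finite:
  fixes F :: "('g \<Rightarrow> complex) \<Rightarrow> complex"
  assumes "finite (UNIV :: 'g set)" "linf_dual F" "finite S"
  shows "F (\<lambda>z. \<Sum>x\<in>S. k x * h x z) = (\<Sum>x\<in>S. k x * F (h x))"
  using assms(3)
proof (induction S rule: finite_induct)
  case empty
  have "F (\<lambda>z. 0 * 0) = 0 * F (\<lambda>_. 0)"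
    using assms(2) linf_const unfolding linf_dual_def by blast
  then show ?case
    by simp
next
  case (insert x S)
  have "F (\<lambda>z. k x * h x z + (\<Sum>x\<in>S. k x * h x z)) = k x * F (h x) + F (\<lambda>z. \<Sum>x\<in>S. k x * h x z)"
    using assms(2) linf_finite[OF assms(1)] unfolding linf_dual_def by simp
  with insert show ?case
    by simp
qed

lemma linf_l1_act_expand_finite:
  fixes a' :: "'g::group_add \<Rightarrow> complex"
  assumes "finite (UNIV :: 'g set)"
  shows "linf_l1_act a' b = (\<lambda>z. \<Sum>x\<in>UNIV. a' x * linf_l1_act (delta x) b z)"
  unfolding linf_l1_act_def pair_delta_left using assms by (simp add: pair_def)

lemma arens1_embed_finite:
  fixes a :: "'g::group_add \<Rightarrow> complex"
  assumes fin: "finite (UNIV :: 'g set)" and "linf_dual a''"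
  shows "arens1 (embed a) a'' a'
    = embed (\<lambda>x. \<Sum>y\<in>UNIV. a'' (linf_l1_act (delta x) (delta y)) * a y) a'"
proof -
  let ?G = "\<lambda>x y. a'' (linf_l1_act (delta x) (delta y))"
  have "arens1 (embed a) a'' a' = (\<Sum>y\<in>UNIV. a'' (linf_l1_act a' (delta y)) * a y)"
    using fin by (simp add: arens1_def embed_def pair_def bidual_linf_act_def)
  also have "\<dots> = (\<Sum>y\<in>UNIV. (\<Sum>x\<in>UNIV. a' x * ?G x y) * a y)"
    by (simp add: linf_l1_act_expand_finite[OF fin, of a']
        linf_dual_sum_finite[OF fin \<open>linf_dual a''\<close> fin])
  also have "\<dots> = (\<Sum>y\<in>UNIV. \<Sum>x\<in>UNIV. a' x * (?G x y * a y))"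
    by (simp add: sum_distrib_right mult.assoc)
  also have "\<dots> = (\<Sum>x\<in>UNIV. a' x * (\<Sum>y\<in>UNIV. ?G x y * a y))"
    by (subst sum.swap) (simp add: sum_distrib_left)
  also have "\<dots> = embed (\<lambda>x. \<Sum>y\<in>UNIV. ?G x y * a y) a'"
    using fin by (simp add: embed_def pair_def)
  finally show ?thesis .
qed

theorem corollary2p4:
  shows "(\<forall>(a :: 'g::group_add \<Rightarrow> complex) a''. l1 a \<longrightarrow> linf_dual a'' \<longrightarrow>
            (\<exists>c. l1 c \<and> (\<forall>a'. linf a' \<longrightarrow> arens1 (embed a) a'' a' = embed c a')))
         \<longleftrightarrow> finite (UNIV :: 'g set)" (is "?closed \<longleftrightarrow> _")
proof
  assume ?closed
  show "finite (UNIV :: 'g set)"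
  proof (rule ccontr)
    assume "infinite (UNIV :: 'g set)"
    then obtain \<Phi> :: "('g \<Rightarrow> complex) \<Rightarrow> complex"
      where \<Phi>: "linf_dual \<Phi>" "\<And>y. \<Phi> (delta y) = 0" "\<Phi> (\<lambda>_. 1) = 1"
      using exists_linf_dual_vanishing_on_deltas by blast
    have "\<exists>c. l1 c \<and> (\<forall>a'. linf a' \<longrightarrow> arens1 (embed (delta 0)) \<Phi> a' = embed c a')"
      using \<open>?closed\<close>[rule_format, OF l1_delta \<Phi>(1)] .
    then have "\<exists>c. \<forall>a'. linf a' \<longrightarrow> \<Phi> a' = embed c a'"
      unfolding arens1_embed_delta_zero by blast
    with not_embed_if_vanishing_on_deltas[OF \<Phi>(2,3)] show False
      by contradiction
  qed
next
  assume fin: "finite (UNIV :: 'g set)"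
  show ?closed
  proof (intro allI impI)
    fix a :: "'g \<Rightarrow> complex" and a'' :: "('g \<Rightarrow> complex) \<Rightarrow> complex"
    assume "linf_dual a''"
    then show "\<exists>c. l1 c \<and> (\<forall>a'. linf a' \<longrightarrow> arens1 (embed a) a'' a' = embed c a')"
      using arens1_embed_finite[OF fin] l1_finite[OF fin] by (intro exI conjI allI impI)
  qed
qed

end
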